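(* Let $I$ be an ESP instance, let $0<\varepsilon\le1$ and $\beta\ge1$, let $\sigma^*$ be an optimal feasible pattern for $I$ and $\sigma_\beta$ a feasible pattern with $L(\sigma_\beta)\le\beta L(\sigma^* )$. Set $\gamma=3/\varepsilon$, $a=\beta\gamma/\varepsilon$, and let $b$ be chosen uniformly at random in $[0,a]$. Define $t_i=e^{(i-2)a+b}$ for $i=1,2,\dots$, let $q$ be the smallest integer such that $L_v(\sigma_\beta)<t_{q+1}$ for all vertices $v$ visited by $\sigma_\beta$, and for $i\in[q]$ let $V_i=\{v \text{ visited by }\sigma_\beta: t_i\le L_v(\sigma_\beta)<t_{i+1}\}$ and $V_i^*=V_i\cap V^*$. For $i\in[q]$ let $I_i$ be the instance obtained from $I$ by setting the weights of all vertices outside $V_i$ to $0$, with objective $C'_i(\sigma)=\sum_{v\in V_i^*}w_v(\gamma t_i+L_v(\sigma))$ over patterns $\sigma$ feasible for $I_i$, and let $\sigma_i^*$ minimize $C'_i$. Then $$\mathbb{E}\Bigl[\sum_{i\in[q]}C'_i(\sigma_i^* )\Bigr]\le(1+\varepsilon)\,L(\sigma^* ),$$ where the expectation is over $b$.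
   Context: ESP: connected undirected graph $G=(V,E)$, root $r$, nonnegative edge lengths $\ell_e$, nonnegative integer weights $w_v$, $V^*=\{v:w_v>0\}$. An expanding search pattern is a sequence $\sigma=(e_1,\dots,e_m)$ of edges with $r\in e_1$ such that $\{e_1,\dots,e_i\}$ is a tree for every $i$; a vertex is visited by $\sigma$ if it is $r$ or an endpoint of some $e_i$; $\sigma$ is feasible (for an instance) if it visits all positive-weight vertices of that instance. For a visited $v\ne r$, $k_v=\min\{i:v\in e_i\}$, $k_r=0$, latency $L_v(\sigma)=\sum_{i\le k_v}\ell_{e_i}$; total latency $L(\sigma)=\sum_{v\in V^*}w_vL_v(\sigma)$. *)

theory Defs
  imports "HOL-Analysis.Analysis"
begin

(* Undirected simple graphs: an edge is a 2-element vertex set. *)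

definition adj :: "'v set set \<Rightarrow> 'v \<Rightarrow> 'v \<Rightarrow> bool" where
  "adj F x y \<longleftrightarrow> x \<noteq> y \<and> {x, y} \<in> F"

(* the edge set F (on vertex set \<Union>F) is a tree: connected and acyclic;
   acyclic = no edge lies on a cycle, i.e. removing an edge disconnects its endpoints *)
definition tree_edges :: "'v set set \<Rightarrow> bool" where
  "tree_edges F \<longleftrightarrow> finite F \<and> (\<forall>e\<in>F. card e = 2)
     \<and> (\<forall>u\<in>\<Union>F. \<forall>v\<in>\<Union>F. (adj F)\<^sup>*\<^sup>* u v)
     \<and> (\<forall>e\<in>F. \<forall>x y. e = {x, y} \<longrightarrow> \<not> (adj (F - {e}))\<^sup>*\<^sup>* x y)"

definition esp_instance :: "'v set \<Rightarrow> 'v set set \<Rightarrow> 'v \<Rightarrow> ('v set \<Rightarrow> real) \<Rightarrow> ('v \<Rightarrow> nat) \<Rightarrow> bool" where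
  "esp_instance V E r l w \<longleftrightarrow> finite V \<and> r \<in> V
     \<and> E \<subseteq> {{u, v} | u v. u \<in> V \<and> v \<in> V \<and> u \<noteq> v}
     \<and> (\<forall>v\<in>V. (adj E)\<^sup>*\<^sup>* r v)
     \<and> (\<forall>e\<in>E. 0 \<le> l e)
     \<and> (\<forall>v. 0 < w v \<longrightarrow> v \<in> V)"

definition esp_pattern :: "'v set set \<Rightarrow> 'v \<Rightarrow> 'v set list \<Rightarrow> bool" where
  "esp_pattern E r \<sigma> \<longleftrightarrow> set \<sigma> \<subseteq> E \<and> distinct \<sigma>
     \<and> (\<sigma> \<noteq> [] \<longrightarrow> r \<in> hd \<sigma>)
     \<and> (\<forall>i\<in>{1..length \<sigma>}. tree_edges (set (take i \<sigma>)))"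

definition visited :: "'v \<Rightarrow> 'v set list \<Rightarrow> 'v set" where
  "visited r \<sigma> = insert r (\<Union>(set \<sigma>))"

(* latency; indices are 0-based here: edge e_{j+1} is \<sigma> ! j *)
definition latency :: "('v set \<Rightarrow> real) \<Rightarrow> 'v \<Rightarrow> 'v set list \<Rightarrow> 'v \<Rightarrow> real" where
  "latency l r \<sigma> v = (if v = r then 0
     else (\<Sum>j\<le>(LEAST j. j < length \<sigma> \<and> v \<in> \<sigma> ! j). l (\<sigma> ! j)))"

definition feasible :: "'v set set \<Rightarrow> 'v \<Rightarrow> ('v \<Rightarrow> nat) \<Rightarrow> 'v set list \<Rightarrow> bool" where
  "feasible E r w \<sigma> \<longleftrightarrow> esp_pattern E r \<sigma> \<and> {v. 0 < w v} \<subseteq> visited r \<sigma>"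

definition total_latency :: "('v set \<Rightarrow> real) \<Rightarrow> 'v \<Rightarrow> ('v \<Rightarrow> nat) \<Rightarrow> 'v set list \<Rightarrow> real" where
  "total_latency l r w \<sigma> = (\<Sum>v\<in>{v. 0 < w v}. real (w v) * latency l r \<sigma> v)"

definition esp_gamma :: "real \<Rightarrow> real" where
  "esp_gamma \<epsilon> = 3 / \<epsilon>"

definition esp_a :: "real \<Rightarrow> real \<Rightarrow> real" where
  "esp_a \<epsilon> \<beta> = \<beta> * esp_gamma \<epsilon> / \<epsilon>"

definition esp_t :: "real \<Rightarrow> real \<Rightarrow> real \<Rightarrow> nat \<Rightarrow> real" where
  "esp_t \<epsilon> \<beta> b i = exp ((real i - 2) * esp_a \<epsilon> \<beta> + b)"

definition esp_q :: "('v set \<Rightarrow> real) \<Rightarrow> 'v \<Rightarrow> 'v set list \<Rightarrow> real \<Rightarrow> real \<Rightarrow> real \<Rightarrow> nat" where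
  "esp_q l r \<sigma>\<beta> \<epsilon> \<beta> b = (LEAST q::nat. \<forall>v\<in>visited r \<sigma>\<beta>. latency l r \<sigma>\<beta> v < esp_t \<epsilon> \<beta> b (q + 1))"

definition esp_V :: "('v set \<Rightarrow> real) \<Rightarrow> 'v \<Rightarrow> 'v set list \<Rightarrow> real \<Rightarrow> real \<Rightarrow> real \<Rightarrow> nat \<Rightarrow> 'v set" where
  "esp_V l r \<sigma>\<beta> \<epsilon> \<beta> b i = {v \<in> visited r \<sigma>\<beta>. esp_t \<epsilon> \<beta> b i \<le> latency l r \<sigma>\<beta> v \<and> latency l r \<sigma>\<beta> v < esp_t \<epsilon> \<beta> b (i + 1)}"

definition esp_w :: "('v set \<Rightarrow> real) \<Rightarrow> 'v \<Rightarrow> ('v \<Rightarrow> nat) \<Rightarrow> 'v set list \<Rightarrow> real \<Rightarrow> real \<Rightarrow> real \<Rightarrow> nat \<Rightarrow> 'v \<Rightarrow> nat" where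
  "esp_w l r w \<sigma>\<beta> \<epsilon> \<beta> b i v = (if v \<in> esp_V l r \<sigma>\<beta> \<epsilon> \<beta> b i then w v else 0)"

(* C'_i(sigma) = sum over V_i^* = V_i \<inter> V^* of w_v (gamma t_i + L_v(sigma)) *)
definition esp_C :: "('v set \<Rightarrow> real) \<Rightarrow> 'v \<Rightarrow> ('v \<Rightarrow> nat) \<Rightarrow> 'v set list \<Rightarrow> real \<Rightarrow> real \<Rightarrow> real \<Rightarrow> nat \<Rightarrow> 'v set list \<Rightarrow> real" where
  "esp_C l r w \<sigma>\<beta> \<epsilon> \<beta> b i \<sigma> =
     (\<Sum>v\<in>esp_V l r \<sigma>\<beta> \<epsilon> \<beta> b i \<inter> {v. 0 < w v}.
        real (w v) * (esp_gamma \<epsilon> * esp_t \<epsilon> \<beta> b i + latency l r \<sigma> v))"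

end

(*
  The layers V_i are disjoint and the reference pattern sigma_opt is feasible for every
  instance I_i, so the sum of the minimal values C'_i is at most the sum over v in V^star
  of w_v (gamma t_i(v) + L_v(sigma_opt)), where i(v) is the layer of v.  The threshold
  t_i(v) is the largest point of exp (b + a Z) not exceeding L_v(sigma_beta), namely
  L_v(sigma_beta) exp (- ((ln L_v(sigma_beta) - b) mod a)); averaged over b in [0, a]
  this is L_v(sigma_beta) (1 - exp (- a)) / a.  Hence the expectation is at most
  gamma L(sigma_beta) / a + L(sigma_opt) <= (gamma beta / a + 1) L(sigma_opt),
  and gamma beta / a = eps.

  The integrand is measurable because the minimal value of C'_i is the optimum of I_i,
  which depends on b only through the finitely many possible layers V_i.
*)

theory Submission imports Defs "HOL-Library.Real_Mod" begin

lemma le_diff_rmod: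
  fixes a b x :: real and k :: int
  assumes "0 < a" "of_int k * a + b \<le> x"
  shows "of_int k * a + b \<le> x - (x - b) rmod a"
proof -
  have "of_int k \<le> (x - b) / a"
    using assms by (simp add: field_simps)
  then have "k \<le> \<lfloor>(x - b) / a\<rfloor>"
    by (simp add: le_floor_iff)
  then have "of_int k * a \<le> a * of_int \<lfloor>(x - b) / a\<rfloor>"
    using assms(1) by (simp add: mult.commute)
  then show ?thesis
    using assms(1) by (simp add: rmod_def)
qed

lemma has_integral_exp_neg_rmod:
  fixes a x :: real
  assumes a: "0 < a"
  shows "((\<lambda>b. exp (- ((x - b) rmod a))) has_integral 1 - exp (- a)) {0..a}"
proof -
  define c where "c = x rmod a"
  have c: "0 \<le> c" "c < a"
    using a by (simp_all add: c_def rmod_nonneg rmod_less)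
  have "x = c + of_int \<lfloor>x / a\<rfloor> * a"
    using a by (simp add: c_def rmod_def)
  then obtain n :: int where x: "x = c + of_int n * a" ..
  have left: "(x - b) rmod a = c - b" if "b \<in> {0..c}" for b
    using that c x by (intro rmod_unique[where n = n]) auto
  have right: "(x - b) rmod a = c - b + a" if "b \<in> {c<..a}" for b
    using that c x by (intro rmod_unique[where n = "n - 1"]) (auto simp: algebra_simps)
  have exp_int: "((\<lambda>b. exp (b + d)) has_integral exp (v + d) - exp (u + d)) {u..v}"
    if "u \<le> v" for u v d :: real
    using that by (intro fundamental_theorem_of_calculus)
      (auto intro!: derivative_eq_intros simp: has_real_derivative_iff_has_vector_derivative[symmetric])
  have "((\<lambda>b. exp (- ((x - b) rmod a))) has_integral exp (c + - c) - exp (0 + - c)) {0..c}"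
    using left exp_int[of 0 c "- c"] c(1) by (auto intro: has_integral_eq[rotated])
  moreover have "((\<lambda>b. exp (- ((x - b) rmod a)))
      has_integral exp (a + (- c - a)) - exp (c + (- c - a))) {c..a}"
    using c(2) by (intro has_integral_spike_finite[OF _ _ exp_int, of "{c}"]) (auto simp: right)
  ultimately have "((\<lambda>b. exp (- ((x - b) rmod a))) has_integral
      (exp (c + - c) - exp (0 + - c)) + (exp (a + (- c - a)) - exp (c + (- c - a)))) {0..a}"
    using c by (intro has_integral_combine) auto
  then show ?thesis
    by simp
qed

lemma sum_disjoint_family_le:
  fixes h :: "'i \<Rightarrow> 'a \<Rightarrow> 'b::ordered_comm_monoid_add"
  assumes "finite I" "finite A" "disjoint_family_on P I"
    and "\<And>i x. i \<in> I \<Longrightarrow> x \<in> P i \<inter> A \<Longrightarrow> h i x \<le> H x"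
    and "\<And>x. x \<in> A \<Longrightarrow> 0 \<le> H x"
  shows "(\<Sum>i\<in>I. \<Sum>x\<in>P i \<inter> A. h i x) \<le> (\<Sum>x\<in>A. H x)"
proof -
  have "(\<Sum>i\<in>I. \<Sum>x\<in>P i \<inter> A. h i x) \<le> (\<Sum>i\<in>I. \<Sum>x\<in>P i \<inter> A. H x)"
    using assms(4) by (intro sum_mono) auto
  also have "\<dots> = (\<Sum>x\<in>(\<Union>i\<in>I. P i \<inter> A). H x)"
    using assms(1-3) by (subst sum.UNION_disjoint) (auto simp: disjoint_family_on_def)
  also have "\<dots> \<le> (\<Sum>x\<in>A. H x)"
    using assms(2,5) by (intro sum_mono2) auto
  finally show ?thesis .
qed

lemma borel_measurable_finite_set_valued:
  fixes F :: "'a \<Rightarrow> 'b set" and h :: "'b set \<Rightarrow> real"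
  assumes "finite X" "\<And>x. F x \<subseteq> X" "\<And>y. y \<in> X \<Longrightarrow> Measurable.pred M (\<lambda>x. y \<in> F x)"
  shows "(\<lambda>x. h (F x)) \<in> borel_measurable M"
proof -
  have "F \<in> M \<rightarrow>\<^sub>M count_space (Pow X)"
    unfolding measurable_count_space_eq2[OF finite_Pow_iff[THEN iffD2, OF assms(1)]]
  proof (intro conjI ballI)
    show "F \<in> space M \<rightarrow> Pow X"
      using assms(2) by auto
  next
    fix S assume "S \<in> Pow X"
    then have "F x = S \<longleftrightarrow> (\<forall>y\<in>X. y \<in> F x \<longleftrightarrow> y \<in> S)" for x
      using assms(2)[of x] by blast
    then have "F -` {S} \<inter> space M = {x \<in> space M. \<forall>y\<in>X. y \<in> F x \<longleftrightarrow> y \<in> S}"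
      by blast
    also have "\<dots> \<in> sets M"
    proof (rule sets.sets_Collect_finite_All[OF _ assms(1)])
      fix y assume "y \<in> X"
      then have "{x \<in> space M. y \<in> F x} \<in> sets M"
        using assms(3) by (simp add: pred_def)
      then show "{x \<in> space M. y \<in> F x \<longleftrightarrow> y \<in> S} \<in> sets M"
        by (cases "y \<in> S") (auto intro: sets.sets_Collect_neg)
    qed
    finally show "F -` {S} \<inter> space M \<in> sets M" .
  qed
  then show ?thesis
    by (rule measurable_compose) simp
qed

lemma latency_nonneg:
  assumes "set \<sigma> \<subseteq> E" "\<forall>e\<in>E. 0 \<le> l e" "v \<in> visited r \<sigma>"
  shows "0 \<le> latency l r \<sigma> v"
proof (cases "v = r")
  case True
  then show ?thesis by (simp add: latency_def)
next
  case False
  then obtain j where j: "j < length \<sigma>" "v \<in> \<sigma> ! j"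
    using assms(3) by (auto simp: visited_def in_set_conv_nth)
  have "(LEAST j. j < length \<sigma> \<and> v \<in> \<sigma> ! j) \<le> j"
    using j by (intro Least_le) auto
  then have "\<forall>k\<le>(LEAST j. j < length \<sigma> \<and> v \<in> \<sigma> ! j). 0 \<le> l (\<sigma> ! k)"
    using j assms(1,2) by (auto simp: subset_iff)
  then show ?thesis
    using False by (auto simp: latency_def intro!: sum_nonneg)
qed

lemma feasible_latency_nonneg:
  assumes "feasible E r w \<sigma>" "\<forall>e\<in>E. 0 \<le> l e" "0 < w v"
  shows "0 \<le> latency l r \<sigma> v"
  using assms by (intro latency_nonneg) (auto simp: feasible_def esp_pattern_def)

lemma total_latency_nonneg:
  assumes "feasible E r w \<sigma>" "\<forall>e\<in>E. 0 \<le> l e"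
  shows "0 \<le> total_latency l r w \<sigma>"
  unfolding total_latency_def using feasible_latency_nonneg[OF assms] by (auto intro!: sum_nonneg)

lemma visited_subset:
  assumes "esp_instance V E r l w" "set \<sigma> \<subseteq> E"
  shows "visited r \<sigma> \<subseteq> V"
  using assms by (fastforce simp: esp_instance_def visited_def)


definition optimal_latency :: "'v set set \<Rightarrow> 'v \<Rightarrow> ('v set \<Rightarrow> real) \<Rightarrow> ('v \<Rightarrow> nat) \<Rightarrow> real" where
  "optimal_latency E r l w = (INF \<sigma> \<in> {\<sigma>. feasible E r w \<sigma>}. total_latency l r w \<sigma>)"

lemma optimal_latency_eqI:
  assumes "feasible E r w \<sigma>"
    and "\<And>\<sigma>'. feasible E r w \<sigma>' \<Longrightarrow> total_latency l r w \<sigma> \<le> total_latency l r w \<sigma>'"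
  shows "optimal_latency E r l w = total_latency l r w \<sigma>"
  unfolding optimal_latency_def using assms by (intro cInf_eq_minimum) auto

lemma optimal_latency_zero_weights: "optimal_latency E r l (\<lambda>_. 0) = 0"
proof -
  have "feasible E r (\<lambda>_. 0) []"
    by (simp add: feasible_def esp_pattern_def)
  then show ?thesis
    by (subst optimal_latency_eqI) (auto simp: total_latency_def)
qed

lemma esp_a_pos: "0 < \<epsilon> \<Longrightarrow> 0 < \<beta> \<Longrightarrow> 0 < esp_a \<epsilon> \<beta>"
  by (simp add: esp_a_def esp_gamma_def)

lemma esp_t_pos: "0 < esp_t \<epsilon> \<beta> b i"
  by (simp add: esp_t_def)

lemma esp_t_mono: "0 \<le> esp_a \<epsilon> \<beta> \<Longrightarrow> i \<le> j \<Longrightarrow> esp_t \<epsilon> \<beta> b i \<le> esp_t \<epsilon> \<beta> b j"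
  by (simp add: esp_t_def mult_right_mono)

lemma esp_t_le_exp_neg_rmod:
  assumes "0 < esp_a \<epsilon> \<beta>" "esp_t \<epsilon> \<beta> b i \<le> y"
  shows "esp_t \<epsilon> \<beta> b i \<le> y * exp (- ((ln y - b) rmod esp_a \<epsilon> \<beta>))"
proof -
  have y: "0 < y"
    using esp_t_pos assms(2) by (rule less_le_trans)
  have "of_int (int i - 2) * esp_a \<epsilon> \<beta> + b \<le> ln y"
    using assms(2) y by (simp add: esp_t_def ln_ge_iff)
  then have "of_int (int i - 2) * esp_a \<epsilon> \<beta> + b \<le> ln y - (ln y - b) rmod esp_a \<epsilon> \<beta>"
    by (rule le_diff_rmod[OF assms(1)])
  then have "esp_t \<epsilon> \<beta> b i \<le> exp (ln y - (ln y - b) rmod esp_a \<epsilon> \<beta>)"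
    by (simp add: esp_t_def)
  also have "\<dots> = y * exp (- ((ln y - b) rmod esp_a \<epsilon> \<beta>))"
    using y by (simp add: exp_diff exp_minus divide_inverse)
  finally show ?thesis .
qed

lemma esp_V_disjoint:
  assumes "0 \<le> esp_a \<epsilon> \<beta>"
  shows "disjoint_family (esp_V l r \<sigma>\<beta> \<epsilon> \<beta> b)"
proof -
  have "esp_V l r \<sigma>\<beta> \<epsilon> \<beta> b i \<inter> esp_V l r \<sigma>\<beta> \<epsilon> \<beta> b j = {}" if "i < j" for i j
    using esp_t_mono[OF assms, of "i + 1" j b] that by (auto simp: esp_V_def)
  then show ?thesis
    unfolding disjoint_family_on_def by (metis Int_commute linorder_neqE_nat)
qed

lemma esp_latency_below_threshold:
  assumes "finite (visited r \<sigma>\<beta>)" "0 < esp_a \<epsilon> \<beta>"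
  obtains Q where "\<And>b v. 0 \<le> b \<Longrightarrow> v \<in> visited r \<sigma>\<beta> \<Longrightarrow> latency l r \<sigma>\<beta> v < esp_t \<epsilon> \<beta> b (Q + 1)"
proof -
  define M where "M = Max (latency l r \<sigma>\<beta> ` visited r \<sigma>\<beta>)"
  obtain n :: nat where n: "M + esp_a \<epsilon> \<beta> < real n * esp_a \<epsilon> \<beta>"
    using reals_Archimedean3[OF assms(2)] by blast
  have "latency l r \<sigma>\<beta> v < esp_t \<epsilon> \<beta> b (n + 1)" if "0 \<le> b" "v \<in> visited r \<sigma>\<beta>" for b v
  proof -
    have "latency l r \<sigma>\<beta> v \<le> M"
      unfolding M_def using assms(1) that(2) by simp
    also have "\<dots> < (real (n + 1) - 2) * esp_a \<epsilon> \<beta> + b"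
      using n that(1) by (simp add: algebra_simps)
    also have "\<dots> < esp_t \<epsilon> \<beta> b (n + 1)"
      unfolding esp_t_def by (rule exp_gt_self)
    finally show ?thesis .
  qed
  then show ?thesis
    using that by blast
qed

lemma esp_q_le:
  "\<forall>v\<in>visited r \<sigma>\<beta>. latency l r \<sigma>\<beta> v < esp_t \<epsilon> \<beta> b (Q + 1) \<Longrightarrow> esp_q l r \<sigma>\<beta> \<epsilon> \<beta> b \<le> Q"
  unfolding esp_q_def by (rule Least_le)

lemma esp_V_eq_empty:
  assumes "\<forall>v\<in>visited r \<sigma>\<beta>. latency l r \<sigma>\<beta> v < esp_t \<epsilon> \<beta> b (Q + 1)" "0 \<le> esp_a \<epsilon> \<beta>"
    and "esp_q l r \<sigma>\<beta> \<epsilon> \<beta> b < i"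
  shows "esp_V l r \<sigma>\<beta> \<epsilon> \<beta> b i = {}"
proof -
  have "\<forall>v\<in>visited r \<sigma>\<beta>. latency l r \<sigma>\<beta> v < esp_t \<epsilon> \<beta> b (esp_q l r \<sigma>\<beta> \<epsilon> \<beta> b + 1)"
    unfolding esp_q_def by (rule LeastI[of _ Q]) (rule assms(1))
  moreover have "esp_t \<epsilon> \<beta> b (esp_q l r \<sigma>\<beta> \<epsilon> \<beta> b + 1) \<le> esp_t \<epsilon> \<beta> b i"
    using assms(2,3) by (intro esp_t_mono) auto
  ultimately show ?thesis
    by (force simp: esp_V_def)
qed

lemma pred_mem_esp_V: "Measurable.pred borel (\<lambda>b. v \<in> esp_V l r \<sigma>\<beta> \<epsilon> \<beta> b i)"
  unfolding esp_V_def esp_t_def by measurable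

lemma esp_w_eq: "esp_w l r w \<sigma>\<beta> \<epsilon> \<beta> b i = (\<lambda>v. if v \<in> esp_V l r \<sigma>\<beta> \<epsilon> \<beta> b i then w v else 0)"
  by (simp add: esp_w_def fun_eq_iff)

lemma feasible_esp_w: "feasible E r w \<sigma> \<Longrightarrow> feasible E r (esp_w l r w \<sigma>\<beta> \<epsilon> \<beta> b i) \<sigma>"
  by (auto simp: feasible_def esp_w_def)

lemma esp_C_eq:
  "esp_C l r w \<sigma>\<beta> \<epsilon> \<beta> b i \<sigma> =
     esp_gamma \<epsilon> * esp_t \<epsilon> \<beta> b i * (\<Sum>v\<in>esp_V l r \<sigma>\<beta> \<epsilon> \<beta> b i \<inter> {v. 0 < w v}. real (w v))
     + total_latency l r (esp_w l r w \<sigma>\<beta> \<epsilon> \<beta> b i) \<sigma>"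
proof -
  have "{v. 0 < esp_w l r w \<sigma>\<beta> \<epsilon> \<beta> b i v} = esp_V l r \<sigma>\<beta> \<epsilon> \<beta> b i \<inter> {v. 0 < w v}"
    by (auto simp: esp_w_def)
  then have "total_latency l r (esp_w l r w \<sigma>\<beta> \<epsilon> \<beta> b i) \<sigma> =
      (\<Sum>v\<in>esp_V l r \<sigma>\<beta> \<epsilon> \<beta> b i \<inter> {v. 0 < w v}. real (w v) * latency l r \<sigma> v)"
    unfolding total_latency_def by (intro sum.cong) (auto simp: esp_w_def)
  then show ?thesis
    by (simp add: esp_C_def distrib_left sum.distrib sum_distrib_left mult_ac)
qed

lemma esp_C_nonneg:
  assumes "\<forall>e\<in>E. 0 \<le> l e" "feasible E r (esp_w l r w \<sigma>\<beta> \<epsilon> \<beta> b i) \<sigma>" "0 < \<epsilon>"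
  shows "0 \<le> esp_C l r w \<sigma>\<beta> \<epsilon> \<beta> b i \<sigma>"
proof -
  have "0 \<le> total_latency l r (esp_w l r w \<sigma>\<beta> \<epsilon> \<beta> b i) \<sigma>"
    using assms(2,1) by (rule total_latency_nonneg)
  then show ?thesis
    using assms(3) esp_t_pos[of \<epsilon> \<beta> b i]
    by (simp add: esp_C_eq esp_gamma_def sum_nonneg)
qed

lemma esp_layer_costs_le:
  assumes "finite {v. 0 < w v}" "finite I" "0 < \<epsilon>" "0 < \<beta>" "\<forall>e\<in>E. 0 \<le> l e"
    and "feasible E r w \<sigma>" "feasible E r w \<sigma>\<beta>"
  shows "(\<Sum>i\<in>I. esp_C l r w \<sigma>\<beta> \<epsilon> \<beta> b i \<sigma>) \<le>
    (\<Sum>v\<in>{v. 0 < w v}. real (w v) * (esp_gamma \<epsilon> * (latency l r \<sigma>\<beta> v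
        * exp (- ((ln (latency l r \<sigma>\<beta> v) - b) rmod esp_a \<epsilon> \<beta>)))
      + latency l r \<sigma> v))"
  unfolding esp_C_def
proof (rule sum_disjoint_family_le[OF assms(2,1)])
  have a: "0 < esp_a \<epsilon> \<beta>"
    using assms(3,4) by (rule esp_a_pos)
  have \<gamma>: "0 \<le> esp_gamma \<epsilon>"
    using assms(3) by (simp add: esp_gamma_def)
  show "disjoint_family_on (esp_V l r \<sigma>\<beta> \<epsilon> \<beta> b) I"
    using esp_V_disjoint[OF less_imp_le[OF a]] by (rule disjoint_family_on_mono[OF subset_UNIV])
  fix i v
  assume "v \<in> esp_V l r \<sigma>\<beta> \<epsilon> \<beta> b i \<inter> {v. 0 < w v}"
  then have "esp_t \<epsilon> \<beta> b i \<le> latency l r \<sigma>\<beta> v"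
    by (simp add: esp_V_def)
  from esp_t_le_exp_neg_rmod[OF a this]
  show "real (w v) * (esp_gamma \<epsilon> * esp_t \<epsilon> \<beta> b i + latency l r \<sigma> v) \<le> real (w v) *
      (esp_gamma \<epsilon> * (latency l r \<sigma>\<beta> v
        * exp (- ((ln (latency l r \<sigma>\<beta> v) - b) rmod esp_a \<epsilon> \<beta>))) + latency l r \<sigma> v)"
    by (intro mult_left_mono[OF add_right_mono[OF mult_left_mono[OF _ \<gamma>]]]) auto
next
  fix v
  assume "v \<in> {v. 0 < w v}"
  then have "0 \<le> latency l r \<sigma> v" "0 \<le> latency l r \<sigma>\<beta> v"
    using feasible_latency_nonneg[OF assms(6,5)] feasible_latency_nonneg[OF assms(7,5)] by simp_all
  then show "0 \<le> real (w v) * (esp_gamma \<epsilon> * (latency l r \<sigma>\<beta> v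
        * exp (- ((ln (latency l r \<sigma>\<beta> v) - b) rmod esp_a \<epsilon> \<beta>)))
      + latency l r \<sigma> v)"
    using assms(3) by (simp add: esp_gamma_def)
qed

(* The reference pattern need not be optimal: only its feasibility and the
   guarantee of sigma_beta against it are used. *)
locale esp_layering =
  fixes V :: "'v set" and E :: "'v set set" and r :: 'v
    and l :: "'v set \<Rightarrow> real" and w :: "'v \<Rightarrow> nat"
    and \<epsilon> \<beta> :: real and \<sigma>ref \<sigma>\<beta> :: "'v set list"
    and \<sigma>i :: "real \<Rightarrow> nat \<Rightarrow> 'v set list"
  assumes inst: "esp_instance V E r l w"
    and eps: "0 < \<epsilon>" and beta: "0 < \<beta>"
    and ref: "feasible E r w \<sigma>ref"
    and approx: "feasible E r w \<sigma>\<beta>"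
      "total_latency l r w \<sigma>\<beta> \<le> \<beta> * total_latency l r w \<sigma>ref"
    and minimizers: "\<forall>b\<in>{0..esp_a \<epsilon> \<beta>}. \<forall>i\<in>{1..esp_q l r \<sigma>\<beta> \<epsilon> \<beta> b}.
        feasible E r (esp_w l r w \<sigma>\<beta> \<epsilon> \<beta> b i) (\<sigma>i b i)
      \<and> (\<forall>\<sigma>. feasible E r (esp_w l r w \<sigma>\<beta> \<epsilon> \<beta> b i) \<sigma> \<longrightarrow>
             esp_C l r w \<sigma>\<beta> \<epsilon> \<beta> b i (\<sigma>i b i) \<le> esp_C l r w \<sigma>\<beta> \<epsilon> \<beta> b i \<sigma>)"
begin

definition cost :: "real \<Rightarrow> real" where
  "cost b = (\<Sum>i\<in>{1..esp_q l r \<sigma>\<beta> \<epsilon> \<beta> b}. esp_C l r w \<sigma>\<beta> \<epsilon> \<beta> b i (\<sigma>i b i))"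

definition cost_bound :: "real \<Rightarrow> real" where
  "cost_bound b = (\<Sum>v\<in>{v. 0 < w v}. real (w v) * (esp_gamma \<epsilon> * (latency l r \<sigma>\<beta> v
      * exp (- ((ln (latency l r \<sigma>\<beta> v) - b) rmod esp_a \<epsilon> \<beta>)))
    + latency l r \<sigma>ref v))"

lemma a_pos: "0 < esp_a \<epsilon> \<beta>"
  using eps beta by (rule esp_a_pos)

lemma lengths_nonneg: "\<forall>e\<in>E. 0 \<le> l e"
  using inst by (simp add: esp_instance_def)

lemma finite_positive_weights: "finite {v. 0 < w v}"
proof (rule finite_subset)
  show "{v. 0 < w v} \<subseteq> V" "finite V"
    using inst by (auto simp: esp_instance_def)
qed

lemma finite_visited_approx: "finite (visited r \<sigma>\<beta>)"
proof (rule finite_subset)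
  show "visited r \<sigma>\<beta> \<subseteq> V"
    using approx(1) by (intro visited_subset[OF inst]) (simp add: feasible_def esp_pattern_def)
  show "finite V"
    using inst by (simp add: esp_instance_def)
qed

lemma minimizerD:
  assumes "b \<in> {0..esp_a \<epsilon> \<beta>}" "i \<in> {1..esp_q l r \<sigma>\<beta> \<epsilon> \<beta> b}"
  shows "feasible E r (esp_w l r w \<sigma>\<beta> \<epsilon> \<beta> b i) (\<sigma>i b i)"
    and "feasible E r (esp_w l r w \<sigma>\<beta> \<epsilon> \<beta> b i) \<sigma> \<Longrightarrow>
      esp_C l r w \<sigma>\<beta> \<epsilon> \<beta> b i (\<sigma>i b i) \<le> esp_C l r w \<sigma>\<beta> \<epsilon> \<beta> b i \<sigma>"
  using minimizers assms by blast+

lemma cost_bounds: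
  assumes "b \<in> {0..esp_a \<epsilon> \<beta>}"
  shows "0 \<le> cost b" and "cost b \<le> cost_bound b"
proof -
  show "0 \<le> cost b"
    unfolding cost_def
    by (intro sum_nonneg esp_C_nonneg[OF lengths_nonneg _ eps] minimizerD(1)[OF assms])
  have "cost b \<le> (\<Sum>i\<in>{1..esp_q l r \<sigma>\<beta> \<epsilon> \<beta> b}. esp_C l r w \<sigma>\<beta> \<epsilon> \<beta> b i \<sigma>ref)"
    unfolding cost_def by (intro sum_mono minimizerD(2)[OF assms] feasible_esp_w ref)
  also have "\<dots> \<le> cost_bound b"
    unfolding cost_bound_def
    by (rule esp_layer_costs_le[OF finite_positive_weights _ eps beta lengths_nonneg ref approx(1)])
      simp
  finally show "cost b \<le> cost_bound b" .
qed

lemma has_integral_cost_bound: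
  "(cost_bound has_integral esp_gamma \<epsilon> * (1 - exp (- esp_a \<epsilon> \<beta>)) * total_latency l r w \<sigma>\<beta>
     + esp_a \<epsilon> \<beta> * total_latency l r w \<sigma>ref) {0..esp_a \<epsilon> \<beta>}"
proof -
  have "((\<lambda>_. latency l r \<sigma>ref v) has_integral esp_a \<epsilon> \<beta> * latency l r \<sigma>ref v) {0..esp_a \<epsilon> \<beta>}" for v
    using has_integral_const_real[of "latency l r \<sigma>ref v" 0 "esp_a \<epsilon> \<beta>"] a_pos by simp
  then have "((\<lambda>b. real (w v) * (esp_gamma \<epsilon> * (latency l r \<sigma>\<beta> v
      * exp (- ((ln (latency l r \<sigma>\<beta> v) - b) rmod esp_a \<epsilon> \<beta>)))
    + latency l r \<sigma>ref v)) has_integral real (w v) * (esp_gamma \<epsilon> * (latency l r \<sigma>\<beta> v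
      * (1 - exp (- esp_a \<epsilon> \<beta>))) + esp_a \<epsilon> \<beta> * latency l r \<sigma>ref v)) {0..esp_a \<epsilon> \<beta>}" for v
    by (intro has_integral_mult_right has_integral_add has_integral_exp_neg_rmod a_pos)
  then have "(cost_bound has_integral (\<Sum>v\<in>{v. 0 < w v}. real (w v) * (esp_gamma \<epsilon> * (latency l r \<sigma>\<beta> v
      * (1 - exp (- esp_a \<epsilon> \<beta>))) + esp_a \<epsilon> \<beta> * latency l r \<sigma>ref v))) {0..esp_a \<epsilon> \<beta>}"
    unfolding cost_bound_def[abs_def] by (intro has_integral_sum finite_positive_weights) auto
  moreover have "(\<Sum>v\<in>{v. 0 < w v}. real (w v) * (esp_gamma \<epsilon> * (latency l r \<sigma>\<beta> v
      * (1 - exp (- esp_a \<epsilon> \<beta>))) + esp_a \<epsilon> \<beta> * latency l r \<sigma>ref v))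
    = esp_gamma \<epsilon> * (1 - exp (- esp_a \<epsilon> \<beta>)) * total_latency l r w \<sigma>\<beta>
      + esp_a \<epsilon> \<beta> * total_latency l r w \<sigma>ref"
    unfolding total_latency_def sum_distrib_left sum.distrib[symmetric]
    by (intro sum.cong) (auto simp: algebra_simps)
  ultimately show ?thesis
    by simp
qed

definition layer_cost :: "real \<Rightarrow> nat \<Rightarrow> real" where
  "layer_cost b i =
    esp_gamma \<epsilon> * esp_t \<epsilon> \<beta> b i * (\<Sum>v\<in>esp_V l r \<sigma>\<beta> \<epsilon> \<beta> b i \<inter> {v. 0 < w v}. real (w v))
    + optimal_latency E r l (esp_w l r w \<sigma>\<beta> \<epsilon> \<beta> b i)"

lemma esp_C_minimizer_eq:
  assumes b: "b \<in> {0..esp_a \<epsilon> \<beta>}" and i: "i \<in> {1..esp_q l r \<sigma>\<beta> \<epsilon> \<beta> b}"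
  shows "esp_C l r w \<sigma>\<beta> \<epsilon> \<beta> b i (\<sigma>i b i) = layer_cost b i"
proof -
  have "optimal_latency E r l (esp_w l r w \<sigma>\<beta> \<epsilon> \<beta> b i)
      = total_latency l r (esp_w l r w \<sigma>\<beta> \<epsilon> \<beta> b i) (\<sigma>i b i)"
  proof (rule optimal_latency_eqI[OF minimizerD(1)[OF b i]])
    fix \<sigma> assume "feasible E r (esp_w l r w \<sigma>\<beta> \<epsilon> \<beta> b i) \<sigma>"
    from minimizerD(2)[OF b i this]
    show "total_latency l r (esp_w l r w \<sigma>\<beta> \<epsilon> \<beta> b i) (\<sigma>i b i)
        \<le> total_latency l r (esp_w l r w \<sigma>\<beta> \<epsilon> \<beta> b i) \<sigma>"
      by (simp add: esp_C_eq)
  qed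
  then show ?thesis
    by (simp add: layer_cost_def esp_C_eq)
qed

lemma cost_eq_sum_layer_cost:
  assumes b: "b \<in> {0..esp_a \<epsilon> \<beta>}"
    and Q: "\<forall>v\<in>visited r \<sigma>\<beta>. latency l r \<sigma>\<beta> v < esp_t \<epsilon> \<beta> b (Q + 1)"
  shows "cost b = (\<Sum>i\<in>{1..Q}. layer_cost b i)"
proof -
  have "layer_cost b i = 0" if "esp_q l r \<sigma>\<beta> \<epsilon> \<beta> b < i" for i
  proof -
    have "esp_V l r \<sigma>\<beta> \<epsilon> \<beta> b i = {}"
      using Q a_pos that by (intro esp_V_eq_empty[where Q = Q]) auto
    then show ?thesis
      by (simp add: layer_cost_def esp_w_eq optimal_latency_zero_weights)
  qed
  moreover have "esp_q l r \<sigma>\<beta> \<epsilon> \<beta> b \<le> Q"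
    using Q by (rule esp_q_le)
  ultimately show ?thesis
    unfolding cost_def using esp_C_minimizer_eq[OF b] by (intro sum.mono_neutral_cong_left) auto
qed

lemma borel_measurable_layer_cost: "(\<lambda>b. layer_cost b i) \<in> borel_measurable borel"
proof -
  have layer_measurable: "(\<lambda>b. h (esp_V l r \<sigma>\<beta> \<epsilon> \<beta> b i)) \<in> borel_measurable borel"
    for h :: "'v set \<Rightarrow> real"
  proof (rule borel_measurable_finite_set_valued[OF finite_visited_approx])
    show "esp_V l r \<sigma>\<beta> \<epsilon> \<beta> b i \<subseteq> visited r \<sigma>\<beta>" for b
      by (auto simp: esp_V_def)
  qed (rule pred_mem_esp_V)
  show ?thesis
    unfolding layer_cost_def esp_w_eq esp_t_def
    by (intro borel_measurable_add borel_measurable_times layer_measurable) simp_all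
qed

lemma cost_measurable: "cost \<in> borel_measurable (lebesgue_on {0..esp_a \<epsilon> \<beta>})"
proof -
  obtain Q where Q: "\<And>b v. 0 \<le> b \<Longrightarrow> v \<in> visited r \<sigma>\<beta> \<Longrightarrow> latency l r \<sigma>\<beta> v < esp_t \<epsilon> \<beta> b (Q + 1)"
    using esp_latency_below_threshold[where l = l, OF finite_visited_approx a_pos] by blast
  have cost_eq: "cost b = (\<Sum>i\<in>{1..Q}. layer_cost b i)" if "b \<in> {0..esp_a \<epsilon> \<beta>}" for b
    using that Q by (intro cost_eq_sum_layer_cost) auto
  have "(\<lambda>b. \<Sum>i\<in>{1..Q}. layer_cost b i) \<in> borel_measurable borel"
    using borel_measurable_layer_cost by (rule borel_measurable_sum)
  then have "(\<lambda>b. \<Sum>i\<in>{1..Q}. layer_cost b i) \<in> borel_measurable (lebesgue_on {0..esp_a \<epsilon> \<beta>})"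
    by (simp add: measurable_completion measurable_restrict_space1)
  then show ?thesis
    using measurable_lebesgue_cong[of "{0..esp_a \<epsilon> \<beta>}", OF cost_eq] by simp
qed

theorem expected_cost_le:
  "cost integrable_on {0..esp_a \<epsilon> \<beta>}
   \<and> integral {0..esp_a \<epsilon> \<beta>} cost / esp_a \<epsilon> \<beta> \<le> (1 + \<epsilon>) * total_latency l r w \<sigma>ref"
proof
  show integrable: "cost integrable_on {0..esp_a \<epsilon> \<beta>}"
  proof (rule measurable_bounded_by_integrable_imp_integrable[OF cost_measurable])
    show "cost_bound integrable_on {0..esp_a \<epsilon> \<beta>}"
      using has_integral_cost_bound by blast
    show "norm (cost b) \<le> cost_bound b" if "b \<in> {0..esp_a \<epsilon> \<beta>}" for b
      using cost_bounds[OF that] by simp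
  qed simp
  have "integral {0..esp_a \<epsilon> \<beta>} cost
      \<le> esp_gamma \<epsilon> * (1 - exp (- esp_a \<epsilon> \<beta>)) * total_latency l r w \<sigma>\<beta>
        + esp_a \<epsilon> \<beta> * total_latency l r w \<sigma>ref"
    using integrable has_integral_cost_bound cost_bounds(2)
    by (rule has_integral_le[OF integrable_integral]) auto
  also have "\<dots> \<le> esp_gamma \<epsilon> * total_latency l r w \<sigma>\<beta> + esp_a \<epsilon> \<beta> * total_latency l r w \<sigma>ref"
    using eps total_latency_nonneg[OF approx(1) lengths_nonneg]
    by (intro add_right_mono mult_right_mono mult_left_le) (auto simp: esp_gamma_def)
  also have "\<dots> \<le> esp_gamma \<epsilon> * (\<beta> * total_latency l r w \<sigma>ref)
      + esp_a \<epsilon> \<beta> * total_latency l r w \<sigma>ref"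
    using eps by (intro add_right_mono mult_left_mono approx(2)) (simp add: esp_gamma_def)
  also have "\<dots> = esp_a \<epsilon> \<beta> * ((1 + \<epsilon>) * total_latency l r w \<sigma>ref)"
    using eps by (simp add: esp_a_def field_simps)
  finally show "integral {0..esp_a \<epsilon> \<beta>} cost / esp_a \<epsilon> \<beta> \<le> (1 + \<epsilon>) * total_latency l r w \<sigma>ref"
    using a_pos by (simp add: divide_le_eq mult.commute)
qed

end

theorem lemma9:
  fixes V :: "'v set" and E :: "'v set set" and r :: 'v
    and l :: "'v set \<Rightarrow> real" and w :: "'v \<Rightarrow> nat"
    and \<epsilon> \<beta> :: real and \<sigma>opt \<sigma>\<beta> :: "'v set list"
    and \<sigma>i :: "real \<Rightarrow> nat \<Rightarrow> 'v set list"
  assumes inst: "esp_instance V E r l w"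
    and eps: "0 < \<epsilon>" "\<epsilon> \<le> 1" and beta: "1 \<le> \<beta>"
    and opt: "feasible E r w \<sigma>opt"
      "\<forall>\<sigma>. feasible E r w \<sigma> \<longrightarrow> total_latency l r w \<sigma>opt \<le> total_latency l r w \<sigma>"
    and approx: "feasible E r w \<sigma>\<beta>"
      "total_latency l r w \<sigma>\<beta> \<le> \<beta> * total_latency l r w \<sigma>opt"
    and minimizers: "\<forall>b\<in>{0..esp_a \<epsilon> \<beta>}. \<forall>i\<in>{1..esp_q l r \<sigma>\<beta> \<epsilon> \<beta> b}.
        feasible E r (esp_w l r w \<sigma>\<beta> \<epsilon> \<beta> b i) (\<sigma>i b i)
      \<and> (\<forall>\<sigma>. feasible E r (esp_w l r w \<sigma>\<beta> \<epsilon> \<beta> b i) \<sigma> \<longrightarrow>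
             esp_C l r w \<sigma>\<beta> \<epsilon> \<beta> b i (\<sigma>i b i) \<le> esp_C l r w \<sigma>\<beta> \<epsilon> \<beta> b i \<sigma>)"
  shows "(\<lambda>b. \<Sum>i\<in>{1..esp_q l r \<sigma>\<beta> \<epsilon> \<beta> b}. esp_C l r w \<sigma>\<beta> \<epsilon> \<beta> b i (\<sigma>i b i))
           integrable_on {0..esp_a \<epsilon> \<beta>}
    \<and> integral {0..esp_a \<epsilon> \<beta>}
        (\<lambda>b. \<Sum>i\<in>{1..esp_q l r \<sigma>\<beta> \<epsilon> \<beta> b}. esp_C l r w \<sigma>\<beta> \<epsilon> \<beta> b i (\<sigma>i b i)) / esp_a \<epsilon> \<beta>
      \<le> (1 + \<epsilon>) * total_latency l r w \<sigma>opt"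
proof -
  interpret esp_layering V E r l w \<epsilon> \<beta> \<sigma>opt \<sigma>\<beta> \<sigma>i
    using inst eps(1) beta opt(1) approx minimizers by unfold_locales auto
  show ?thesis
    using expected_cost_le unfolding cost_def[abs_def] .
qed

end
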